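(* Let $(\mathbb S,+,\cdot)$ be an S-Ring with Base Unit $A$, and let $m\in\mathbb S_0$ and $s\in\mathbb S$. Then there exist $x,y\in\mathbb S_0$ with $s=x-1+y\cdot A$, and for such $x,y$ one has $m\cdot s=m\cdot(x-y)+y-1+(m\cdot y)\cdot A$.
   Context: An S-Structure is a triple $(\mathbb S,+,\cdot)$ where $\mathbb S$ is a set and $+,\cdot$ are binary operations on $\mathbb S$ such that: $(\mathbb S,+)$ is a commutative group with identity $0$ (the inverse of $s$ is written $-s$, and $s-t:=s+(-t)$); $\mathbb S$ is closed under $\cdot$; and there exists $s\in\mathbb S$ with $0\cdot s\neq 0$ or $s\cdot 0\neq 0$. Multiplication binds tighter than addition. The structures considered come with a distinguished element of $\mathbb S$ denoted $1$. It is Commutative if $s\cdot t=t\cdot s$ for all $s,t$. For a Commutative S-Structure and $\alpha\in\mathbb S$, put $\mathbb S_\alpha=\{s\in\mathbb S:0\cdot s=s\cdot 0=\alpha\}$ and $\Lambda=\{\alpha\in\mathbb S:\mathbb S_\alpha\neq\emptyset\}$. Wheel Distributive: $s\cdot(t+r)+(s\cdot 0)=(s\cdot t)+(s\cdot r)$ for all $s,t,r\in\mathbb S$. S-Associative: for all $m,n\in\mathbb S_0$ and $s\in\mathbb S$, $m\cdot(n\cdot s)=(m\cdot n)\cdot s-([(m-1)\cdot(n-1)]\cdot(0\cdot s))$. Base: if $\mathbb S_0\neq\emptyset$ and $\alpha\in\Lambda$, $q\in\mathbb S_\alpha$ is a Base for $\mathbb S_\alpha$ if $q+\beta\in\mathbb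 S_\alpha$ for all $\beta\in\mathbb S_0$ and every $s\in\mathbb S_\alpha$ equals $q+\beta$ for some $\beta\in\mathbb S_0$. Coordinated: $\mathbb S_0\neq\emptyset$ and every $\mathbb S_\alpha$ with $\alpha\in\Lambda$ has a Base. Standard Bases: a Coordinated Commutative S-Structure has Standard Bases if there is a specified element $q_0(1)\in\mathbb S_1$ which is a Base for $\mathbb S_1$, and for every $\alpha\in\Lambda$ the element $q_0(\alpha):=\alpha\cdot(q_0(1)+1)-1$ lies in $\mathbb S_\alpha$ and is a Base for $\mathbb S_\alpha$. The Base Unit is $A:=q_0(1)+1$. An Essential S-Structure is an S-Structure that is Commutative, Wheel Distributive, S-Associative, has Standard Bases (in particular is Coordinated), satisfies $0,1\in\mathbb S_0$, and satisfies $\mathbb S_0=\{1\cdot x:x\in\mathbb S_0\}$. A Unity is an element $e\in\Lambda$ with $e\cdot s=s\cdot e=s$ for all $s\in\mathbb S$. An S-Ring is an Essential S-Structure which has a Unity. *)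

theory Defs
  imports Main
begin

text \<open>An S-Structure on the carrier given by the whole type 'a.
  add = +, mul = \<cdot>, zero = 0, neg = additive inverse, one = distinguished 1.\<close>

definition S_structure :: "('a \<Rightarrow> 'a \<Rightarrow> 'a) \<Rightarrow> ('a \<Rightarrow> 'a \<Rightarrow> 'a) \<Rightarrow> 'a \<Rightarrow> ('a \<Rightarrow> 'a) \<Rightarrow> bool" where
  "S_structure add mul zero neg \<longleftrightarrow>
     (\<forall>a b c. add (add a b) c = add a (add b c)) \<and>
     (\<forall>a b. add a b = add b a) \<and>
     (\<forall>a. add zero a = a) \<and>
     (\<forall>a. add a (neg a) = zero) \<and>
     (\<exists>s. mul zero s \<noteq> zero \<or> mul s zero \<noteq> zero)"

definition S_sub :: "('a \<Rightarrow> 'a \<Rightarrow> 'a) \<Rightarrow> ('a \<Rightarrow> 'a) \<Rightarrow> 'a \<Rightarrow> 'a \<Rightarrow> 'a" where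
  "S_sub add neg a b = add a (neg b)"

definition S_commutative :: "('a \<Rightarrow> 'a \<Rightarrow> 'a) \<Rightarrow> bool" where
  "S_commutative mul \<longleftrightarrow> (\<forall>s t. mul s t = mul t s)"

definition S_alpha :: "('a \<Rightarrow> 'a \<Rightarrow> 'a) \<Rightarrow> 'a \<Rightarrow> 'a \<Rightarrow> 'a set" where
  "S_alpha mul zero \<alpha> = {s. mul zero s = \<alpha> \<and> mul s zero = \<alpha>}"

definition S_Lambda :: "('a \<Rightarrow> 'a \<Rightarrow> 'a) \<Rightarrow> 'a \<Rightarrow> 'a set" where
  "S_Lambda mul zero = {\<alpha>. S_alpha mul zero \<alpha> \<noteq> {}}"

definition wheel_distributive :: "('a \<Rightarrow> 'a \<Rightarrow> 'a) \<Rightarrow> ('a \<Rightarrow> 'a \<Rightarrow> 'a) \<Rightarrow> 'a \<Rightarrow> bool" where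
  "wheel_distributive add mul zero \<longleftrightarrow>
     (\<forall>s t r. add (mul s (add t r)) (mul s zero) = add (mul s t) (mul s r))"

definition S_associative :: "('a \<Rightarrow> 'a \<Rightarrow> 'a) \<Rightarrow> ('a \<Rightarrow> 'a \<Rightarrow> 'a) \<Rightarrow> 'a \<Rightarrow> ('a \<Rightarrow> 'a) \<Rightarrow> 'a \<Rightarrow> bool" where
  "S_associative add mul zero neg one \<longleftrightarrow>
     (\<forall>m \<in> S_alpha mul zero zero. \<forall>n \<in> S_alpha mul zero zero. \<forall>s.
        mul m (mul n s) =
        S_sub add neg (mul (mul m n) s)
          (mul (mul (S_sub add neg m one) (S_sub add neg n one)) (mul zero s)))"

definition is_Base :: "('a \<Rightarrow> 'a \<Rightarrow> 'a) \<Rightarrow> ('a \<Rightarrow> 'a \<Rightarrow> 'a) \<Rightarrow> 'a \<Rightarrow> 'a \<Rightarrow> 'a \<Rightarrow> bool" where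
  "is_Base add mul zero \<alpha> q \<longleftrightarrow>
     q \<in> S_alpha mul zero \<alpha> \<and>
     (\<forall>\<beta> \<in> S_alpha mul zero zero. add q \<beta> \<in> S_alpha mul zero \<alpha>) \<and>
     (\<forall>s \<in> S_alpha mul zero \<alpha>. \<exists>\<beta> \<in> S_alpha mul zero zero. s = add q \<beta>)"

definition coordinated :: "('a \<Rightarrow> 'a \<Rightarrow> 'a) \<Rightarrow> ('a \<Rightarrow> 'a \<Rightarrow> 'a) \<Rightarrow> 'a \<Rightarrow> bool" where
  "coordinated add mul zero \<longleftrightarrow>
     S_alpha mul zero zero \<noteq> {} \<and>
     (\<forall>\<alpha> \<in> S_Lambda mul zero. \<exists>q. is_Base add mul zero \<alpha> q)"

text \<open>q0(\<alpha>) := \<alpha>\<cdot>(q0(1)+1) - 1, where q01 is the specified element q0(1).\<close>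
definition q0 :: "('a \<Rightarrow> 'a \<Rightarrow> 'a) \<Rightarrow> ('a \<Rightarrow> 'a \<Rightarrow> 'a) \<Rightarrow> ('a \<Rightarrow> 'a) \<Rightarrow> 'a \<Rightarrow> 'a \<Rightarrow> 'a \<Rightarrow> 'a" where
  "q0 add mul neg one q01 \<alpha> = S_sub add neg (mul \<alpha> (add q01 one)) one"

definition standard_bases :: "('a \<Rightarrow> 'a \<Rightarrow> 'a) \<Rightarrow> ('a \<Rightarrow> 'a \<Rightarrow> 'a) \<Rightarrow> 'a \<Rightarrow> ('a \<Rightarrow> 'a) \<Rightarrow> 'a \<Rightarrow> 'a \<Rightarrow> bool" where
  "standard_bases add mul zero neg one q01 \<longleftrightarrow>
     coordinated add mul zero \<and> S_commutative mul \<and>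
     is_Base add mul zero one q01 \<and>
     (\<forall>\<alpha> \<in> S_Lambda mul zero.
        q0 add mul neg one q01 \<alpha> \<in> S_alpha mul zero \<alpha> \<and>
        is_Base add mul zero \<alpha> (q0 add mul neg one q01 \<alpha>))"

definition base_unit :: "('a \<Rightarrow> 'a \<Rightarrow> 'a) \<Rightarrow> 'a \<Rightarrow> 'a \<Rightarrow> 'a" where
  "base_unit add one q01 = add q01 one"

definition essential :: "('a \<Rightarrow> 'a \<Rightarrow> 'a) \<Rightarrow> ('a \<Rightarrow> 'a \<Rightarrow> 'a) \<Rightarrow> 'a \<Rightarrow> ('a \<Rightarrow> 'a) \<Rightarrow> 'a \<Rightarrow> 'a \<Rightarrow> bool" where
  "essential add mul zero neg one q01 \<longleftrightarrow>
     S_structure add mul zero neg \<and>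
     S_commutative mul \<and>
     wheel_distributive add mul zero \<and>
     S_associative add mul zero neg one \<and>
     standard_bases add mul zero neg one q01 \<and>
     zero \<in> S_alpha mul zero zero \<and> one \<in> S_alpha mul zero zero \<and>
     S_alpha mul zero zero = {mul one x | x. x \<in> S_alpha mul zero zero}"

definition is_unity :: "('a \<Rightarrow> 'a \<Rightarrow> 'a) \<Rightarrow> 'a \<Rightarrow> 'a \<Rightarrow> bool" where
  "is_unity mul zero e \<longleftrightarrow> e \<in> S_Lambda mul zero \<and> (\<forall>s. mul e s = s \<and> mul s e = s)"

definition S_ring :: "('a \<Rightarrow> 'a \<Rightarrow> 'a) \<Rightarrow> ('a \<Rightarrow> 'a \<Rightarrow> 'a) \<Rightarrow> 'a \<Rightarrow> ('a \<Rightarrow> 'a) \<Rightarrow> 'a \<Rightarrow> 'a \<Rightarrow> bool" where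
  "S_ring add mul zero neg one q01 \<longleftrightarrow>
     essential add mul zero neg one q01 \<and> (\<exists>e. is_unity mul zero e)"

end

theory Submission
  imports Defs
begin

text \<open>
  Elements of \<open>S\<^sub>0\<close> act additively, by wheel distributivity. A unity \<open>e\<close> lies in
  \<open>S\<^sub>0 = 1\<cdot>S\<^sub>0\<close>, and S-associativity then forces \<open>e = 1\<close>; in particular \<open>0\<cdot>(0\<cdot>s) = 0\<close>.
  So \<open>s \<in> S\<^sub>\<alpha>\<close> with \<open>\<alpha> = 0\<cdot>s \<in> S\<^sub>0\<close>, and the standard base of \<open>S\<^sub>\<alpha>\<close> writes
  \<open>s = \<beta> - 1 + \<alpha>\<cdot>A\<close>. For \<open>m, y \<in> S\<^sub>0\<close>, S-associativity together with \<open>0\<cdot>A = 1\<close> gives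
  \<open>m\<cdot>(y\<cdot>A) = (m\<cdot>y)\<cdot>A - (m - 1)\<cdot>(y - 1)\<close>, and expanding by additivity yields the formula.
\<close>

locale comm_wheel_structure =
  fixes add :: "'a \<Rightarrow> 'a \<Rightarrow> 'a" (infixl "\<oplus>" 65)
    and mul :: "'a \<Rightarrow> 'a \<Rightarrow> 'a" (infixl "\<otimes>" 70)
    and zero :: 'a ("\<zero>")
    and neg :: "'a \<Rightarrow> 'a" ("\<ominus> _" [81] 80)
  assumes S_structure: "S_structure add mul zero neg"
    and commutative: "S_commutative mul"
    and wheel_distributive: "wheel_distributive add mul zero"
begin

sublocale add: comm_monoid add zero
  using S_structure unfolding S_structure_def by unfold_locales auto

sublocale add: group add zero neg
  using S_structure unfolding S_structure_def by unfold_locales (auto simp: add.commute)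

lemma add_neg_eq_zero_iff: "a \<oplus> \<ominus> b = \<zero> \<longleftrightarrow> a = b"
proof
  assume "a \<oplus> \<ominus> b = \<zero>"
  then have "\<ominus> a = \<ominus> b"
    by (rule add.inverse_unique)
  then show "a = b"
    by (metis add.inverse_inverse)
qed simp

lemma add_neg_eq_self_iff: "a = a \<oplus> \<ominus> b \<longleftrightarrow> b = \<zero>"
  by (metis add.comm_neutral add.left_cancel add.inverse_neutral add.inverse_inverse)

lemma add_left_commute_neg_cancel: "a \<oplus> (b \<oplus> (\<ominus> a \<oplus> c)) = b \<oplus> c"
proof -
  have "a \<oplus> (\<ominus> a \<oplus> c) = c"
    by (simp add: add.assoc[symmetric])
  then show ?thesis
    by (simp add: add.left_commute[of a b])
qed

lemma mul_commute: "a \<otimes> b = b \<otimes> a"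
  using commutative unfolding S_commutative_def by blast

abbreviation S0 :: "'a set" where
  "S0 \<equiv> S_alpha mul zero zero"

lemma mem_S0_iff: "m \<in> S0 \<longleftrightarrow> \<zero> \<otimes> m = \<zero>"
  unfolding S_alpha_def by (auto simp: mul_commute)

lemma S0_mul_zero: "m \<in> S0 \<Longrightarrow> m \<otimes> \<zero> = \<zero>"
  by (simp add: mem_S0_iff mul_commute)

lemma S0_mul_add: "m \<in> S0 \<Longrightarrow> m \<otimes> (a \<oplus> b) = m \<otimes> a \<oplus> m \<otimes> b"
  using wheel_distributive unfolding wheel_distributive_def by (metis S0_mul_zero add.comm_neutral)

lemma S0_mul_neg: "m \<in> S0 \<Longrightarrow> m \<otimes> (\<ominus> a) = \<ominus> (m \<otimes> a)"
  by (metis S0_mul_add S0_mul_zero add.inverse_unique add.right_inverse)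

end

locale essential_structure =
  fixes add :: "'a \<Rightarrow> 'a \<Rightarrow> 'a" (infixl "\<oplus>" 65)
    and mul :: "'a \<Rightarrow> 'a \<Rightarrow> 'a" (infixl "\<otimes>" 70)
    and zero :: 'a ("\<zero>")
    and neg :: "'a \<Rightarrow> 'a" ("\<ominus> _" [81] 80)
    and one :: 'a ("\<one>")
    and q01 :: 'a
  assumes essential: "essential add mul zero neg one q01"

sublocale essential_structure \<subseteq> comm_wheel_structure
  using essential unfolding essential_def by unfold_locales auto

context essential_structure
begin

abbreviation A :: 'a where
  "A \<equiv> base_unit add one q01"

lemma zero_in_S0: "\<zero> \<in> S0"
  and one_in_S0: "\<one> \<in> S0"
  and S0_eq_one_mul_S0: "S0 = {\<one> \<otimes> x | x. x \<in> S0}"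
  using essential unfolding essential_def by auto

lemma S0_add: "a \<in> S0 \<Longrightarrow> b \<in> S0 \<Longrightarrow> a \<oplus> b \<in> S0"
  by (simp add: mem_S0_iff S0_mul_add[OF zero_in_S0])

lemma S0_neg: "a \<in> S0 \<Longrightarrow> \<ominus> a \<in> S0"
  by (simp add: mem_S0_iff S0_mul_neg[OF zero_in_S0])

lemma S0_neg_mul_neg:
  assumes a: "a \<in> S0" and b: "b \<in> S0"
  shows "(\<ominus> a) \<otimes> (\<ominus> b) = a \<otimes> b"
proof -
  have "(\<ominus> a) \<otimes> (\<ominus> b) = \<ominus> ((\<ominus> a) \<otimes> b)"
    by (rule S0_mul_neg[OF S0_neg[OF a]])
  also have "(\<ominus> a) \<otimes> b = \<ominus> (b \<otimes> a)"
    using S0_mul_neg[OF b, of a] by (simp add: mul_commute)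
  finally show ?thesis
    by (simp add: mul_commute)
qed

lemma S_assoc:
  "m \<in> S0 \<Longrightarrow> n \<in> S0 \<Longrightarrow>
    m \<otimes> (n \<otimes> s) = (m \<otimes> n) \<otimes> s \<oplus> \<ominus> (((m \<oplus> \<ominus> \<one>) \<otimes> (n \<oplus> \<ominus> \<one>)) \<otimes> (\<zero> \<otimes> s))"
  using essential unfolding essential_def S_associative_def S_sub_def by blast

lemma zero_mul_base_unit: "\<zero> \<otimes> A = \<one>"
proof -
  have "is_Base add mul zero \<one> q01"
    using essential unfolding essential_def standard_bases_def by blast
  then have "\<zero> \<otimes> q01 = \<one>"
    unfolding is_Base_def S_alpha_def by blast
  then show ?thesis
    using one_in_S0 by (simp add: base_unit_def S0_mul_add[OF zero_in_S0] mem_S0_iff)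
qed

lemma standard_base_decomposition: "\<exists>\<beta>\<in>S0. s = \<beta> \<oplus> \<ominus> \<one> \<oplus> (\<zero> \<otimes> s) \<otimes> A"
proof -
  define \<alpha> where "\<alpha> = \<zero> \<otimes> s"
  have s: "s \<in> S_alpha mul zero \<alpha>"
    unfolding S_alpha_def \<alpha>_def by (simp add: mul_commute)
  then have "\<alpha> \<in> S_Lambda mul zero"
    unfolding S_Lambda_def by blast
  then have "is_Base add mul zero \<alpha> (q0 add mul neg one q01 \<alpha>)"
    using essential unfolding essential_def standard_bases_def by blast
  then obtain \<beta> where "\<beta> \<in> S0" and "s = q0 add mul neg one q01 \<alpha> \<oplus> \<beta>"
    using s unfolding is_Base_def by blast
  moreover from this(2) have "s = \<beta> \<oplus> \<ominus> \<one> \<oplus> (\<zero> \<otimes> s) \<otimes> A"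
    unfolding \<alpha>_def q0_def S_sub_def base_unit_def by (simp add: add.assoc add.commute add.left_commute)
  ultimately show ?thesis
    by blast
qed

lemma one_mul_one_mul_one: "(\<one> \<otimes> \<one>) \<otimes> \<one> = \<one>"
proof -
  have "\<zero> \<otimes> (\<zero> \<otimes> A) = (\<zero> \<otimes> \<zero>) \<otimes> A \<oplus> \<ominus> (((\<ominus> \<one>) \<otimes> (\<ominus> \<one>)) \<otimes> (\<zero> \<otimes> A))"
    using S_assoc[OF zero_in_S0 zero_in_S0, of A] by simp
  then have "\<one> \<oplus> \<ominus> ((\<one> \<otimes> \<one>) \<otimes> \<one>) = \<zero>"
    using zero_in_S0 one_in_S0
    by (simp add: zero_mul_base_unit S0_neg_mul_neg mem_S0_iff)
  then show ?thesis
    unfolding add_neg_eq_zero_iff by (rule sym)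
qed

end

locale S_ring_structure = essential_structure +
  assumes has_unity: "\<exists>e. is_unity mul zero e"
begin

lemma unity_in_S0: "is_unity mul zero e \<Longrightarrow> e \<in> S0"
  unfolding is_unity_def by (simp add: mem_S0_iff)

lemma one_mul_one: "\<one> \<otimes> \<one> = \<one>"
proof -
  obtain e where e: "is_unity mul zero e"
    using has_unity ..
  then have e_mul: "\<And>s. e \<otimes> s = s" and e_S0: "e \<in> S0"
    by (auto simp: is_unity_def unity_in_S0)
  have e1_S0: "e \<oplus> \<ominus> \<one> \<in> S0"
    by (simp add: S0_add S0_neg e_S0 one_in_S0)
  have "(e \<oplus> \<ominus> \<one>) \<otimes> (\<ominus> \<one>) = \<ominus> (\<one> \<otimes> (e \<oplus> \<ominus> \<one>))"
    using S0_mul_neg[OF e1_S0, of \<one>] by (simp add: mul_commute)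
  also have "\<dots> = \<one> \<otimes> \<one> \<oplus> \<ominus> \<one>"
    using e_mul[of \<one>]
    by (simp add: S0_mul_add S0_mul_neg one_in_S0 mul_commute[of \<one> e] add.inverse_distrib_swap)
  finally have k: "(e \<oplus> \<ominus> \<one>) \<otimes> (\<ominus> \<one>) = \<one> \<otimes> \<one> \<oplus> \<ominus> \<one>" .
  have "\<one> = e \<otimes> (\<zero> \<otimes> A)"
    by (simp add: zero_mul_base_unit e_mul)
  also have "\<dots> = \<one> \<oplus> \<ominus> ((\<one> \<otimes> \<one> \<oplus> \<ominus> \<one>) \<otimes> \<one>)"
    using S_assoc[OF e_S0 zero_in_S0, of A] by (simp add: k S0_mul_zero e_S0 e_mul zero_mul_base_unit)
  finally have "(\<one> \<otimes> \<one> \<oplus> \<ominus> \<one>) \<otimes> \<one> = \<zero>"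
    unfolding add_neg_eq_self_iff .
  moreover have "(\<one> \<otimes> \<one> \<oplus> \<ominus> \<one>) \<otimes> \<one> = \<one> \<oplus> \<ominus> (\<one> \<otimes> \<one>)"
    using one_mul_one_mul_one mul_commute[of "\<one> \<otimes> \<one>" \<one>]
    by (simp add: mul_commute[of "\<one> \<otimes> \<one> \<oplus> \<ominus> \<one>" \<one>] S0_mul_add S0_mul_neg one_in_S0)
  ultimately show ?thesis
    by (simp add: add_neg_eq_zero_iff)
qed

lemma unity_eq_one:
  assumes e: "is_unity mul zero e"
  shows "e = \<one>"
proof -
  obtain x where x: "x \<in> S0" and e_eq: "e = \<one> \<otimes> x"
    using unity_in_S0[OF e] S0_eq_one_mul_S0 by blast
  have "\<one> \<otimes> e = (\<one> \<otimes> \<one>) \<otimes> x \<oplus> \<ominus> (((\<one> \<oplus> \<ominus> \<one>) \<otimes> (\<one> \<oplus> \<ominus> \<one>)) \<otimes> (\<zero> \<otimes> x))"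
    unfolding e_eq by (rule S_assoc[OF one_in_S0 one_in_S0])
  also have "\<dots> = e"
    using x zero_in_S0 by (simp add: e_eq one_mul_one mem_S0_iff)
  finally show ?thesis
    using e unfolding is_unity_def by (simp add: mul_commute[of \<one> e])
qed

lemma one_mul [simp]: "\<one> \<otimes> s = s"
  using has_unity unity_eq_one unfolding is_unity_def by blast

lemma mul_one [simp]: "s \<otimes> \<one> = s"
  using one_mul[of s] by (simp add: mul_commute)

lemma zero_mul_in_S0: "\<zero> \<otimes> s \<in> S0"
proof -
  have "\<zero> \<otimes> s = \<zero> \<otimes> s \<oplus> \<ominus> ((\<zero> \<otimes> (\<ominus> \<one>)) \<otimes> (\<zero> \<otimes> s))"
    using S_assoc[OF one_in_S0 zero_in_S0, of s] zero_in_S0 by (simp add: S0_mul_zero)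
  then have "\<zero> \<otimes> (\<zero> \<otimes> s) = \<zero>"
    using S0_neg[OF one_in_S0] by (simp add: add_neg_eq_self_iff mem_S0_iff)
  then show ?thesis
    by (simp add: mem_S0_iff)
qed

lemma exists_S0_coordinates: "\<exists>x\<in>S0. \<exists>y\<in>S0. s = x \<oplus> \<ominus> \<one> \<oplus> y \<otimes> A"
  using standard_base_decomposition zero_mul_in_S0 by blast

lemma S0_mul_coordinates:
  assumes m: "m \<in> S0" and y: "y \<in> S0"
  shows "m \<otimes> (x \<oplus> \<ominus> \<one> \<oplus> y \<otimes> A) = m \<otimes> (x \<oplus> \<ominus> y) \<oplus> y \<oplus> \<ominus> \<one> \<oplus> (m \<otimes> y) \<otimes> A"
proof -
  have y1: "y \<oplus> \<ominus> \<one> \<in> S0"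
    using y by (simp add: S0_add S0_neg one_in_S0)
  have "(m \<oplus> \<ominus> \<one>) \<otimes> (y \<oplus> \<ominus> \<one>) = m \<otimes> y \<oplus> \<ominus> m \<oplus> \<ominus> (y \<oplus> \<ominus> \<one>)"
    using S0_mul_add[OF y1, of m "\<ominus> \<one>"] S0_mul_neg[OF y1, of \<one>] S0_mul_add[OF m] S0_mul_neg[OF m]
    by (simp add: mul_commute[of "y \<oplus> \<ominus> \<one>"] mul_commute[of y m])
  moreover have "m \<otimes> (y \<otimes> A) = (m \<otimes> y) \<otimes> A \<oplus> \<ominus> ((m \<oplus> \<ominus> \<one>) \<otimes> (y \<oplus> \<ominus> \<one>))"
    using S_assoc[OF m y, of A] by (simp add: zero_mul_base_unit)
  ultimately show ?thesis
    using m by (simp add: S0_mul_add S0_mul_neg add.inverse_distrib_swap add.assoc add.commute add.left_commute add_left_commute_neg_cancel)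
qed

end

theorem proposition3p2p4:
  fixes add mul :: "'a \<Rightarrow> 'a \<Rightarrow> 'a" and zero one q01 m s :: 'a and neg :: "'a \<Rightarrow> 'a"
  assumes ring: "S_ring add mul zero neg one q01"
    and m: "m \<in> S_alpha mul zero zero"
  defines "A \<equiv> base_unit add one q01"
  shows "(\<exists>x \<in> S_alpha mul zero zero. \<exists>y \<in> S_alpha mul zero zero.
            s = add (S_sub add neg x one) (mul y A)) \<and>
         (\<forall>x \<in> S_alpha mul zero zero. \<forall>y \<in> S_alpha mul zero zero.
            s = add (S_sub add neg x one) (mul y A) \<longrightarrow>
            mul m s = add (S_sub add neg (add (mul m (S_sub add neg x y)) y) one) (mul (mul m y) A))"
proof -
  interpret S_ring_structure add mul zero neg one q01
    using ring unfolding S_ring_def by unfold_locales auto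
  show ?thesis
    unfolding A_def S_sub_def using exists_S0_coordinates S0_mul_coordinates[OF m] by auto
qed

end
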